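(* Let $H_{\mathrm{gen}}$ be a generalized Hubbard Hamiltonian on a finite simple graph $G=(V,E)$ and let $\eta^\dagger=\sum_{\boldsymbol r}q_{\boldsymbol r}c^\dagger_{\boldsymbol r,\uparrow}c^\dagger_{\boldsymbol r,\downarrow}$ satisfy $[H_{\mathrm{gen}},\eta^\dagger]=\mathcal{E}\eta^\dagger$ for some $\mathcal{E}\in\mathbb{R}$. Let $M\ge1$, let $\mathcal{S}$ be a collection of $(M+1)$-element subsets of $V$, and for each $S\in\mathcal{S}$ and each spin assignment $\sigma:S\to\{\uparrow,\downarrow\}$ let $V^{\sigma}_S\in\mathbb{R}$. Define $$\hat I_{M+1}=\sum_{S\in\mathcal{S}}\ \sum_{\sigma:S\to\{\uparrow,\downarrow\}}V^{\sigma}_S\prod_{\boldsymbol r\in S}\hat n_{\boldsymbol r,\sigma(\boldsymbol r)},$$ and assume $\sum_{\sigma:S\to\{\uparrow,\downarrow\}}V^{\sigma}_S=0$ for every $S\in\mathcal{S}$. Let $H=H_{\mathrm{gen}}+\hat I_{M+1}$, $H_0=H$, $H_{n+1}=[H_n,\eta^\dagger]$, and let $\ket{\Omega}$ be the fermionic vacuum. Then $H\ket\Omega=0$, $H_1\ket\Omega=\mathcal{E}\eta^\dagger\ket\Omega$, $H_n\ket\Omega=0$ for $2\le n\le M$, $H_{M+1}=0$, and for every integer $n\ge0$, $$H\,(\eta^\dagger)^n\ket\Omega=n\mathcal{E}\,(\eta^\dagger)^n\ket\Omega.$$ (For $M=1$ this covers two-body density interactions $\hat I_2=\sum_{\sigma,\sigma'}\sum_{\{\boldsymbol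 r,\boldsymbol r'\}}V^{\sigma,\sigma'}_{\boldsymbol r,\boldsymbol r'}\hat n_{\boldsymbol r,\sigma}\hat n_{\boldsymbol r',\sigma'}$ over pairs of distinct sites with $\sum_{\sigma,\sigma'}V^{\sigma,\sigma'}_{\boldsymbol r,\boldsymbol r'}=0$ for each pair, e.g. nearest-neighbour $S^z S^z$ interactions.)
   Context: Generalized Hubbard Hamiltonian on a finite simple graph $G=(V,E)$ (each edge with a fixed orientation): $H_{\mathrm{gen}}=-\sum_{\sigma,\sigma'}\sum_{\{\boldsymbol r,\boldsymbol r'\}\in E}(t^{\sigma,\sigma'}_{\boldsymbol r,\boldsymbol r'}c^\dagger_{\boldsymbol r,\sigma}c_{\boldsymbol r',\sigma'}+t^{\sigma',\sigma}_{\boldsymbol r',\boldsymbol r}c^\dagger_{\boldsymbol r',\sigma'}c_{\boldsymbol r,\sigma})-\sum_{\boldsymbol r,\sigma}\mu_{\boldsymbol r,\sigma}\hat n_{\boldsymbol r,\sigma}+\sum_{\boldsymbol r}U_{\boldsymbol r}\hat n_{\boldsymbol r,\uparrow}\hat n_{\boldsymbol r,\downarrow}$ with $t^{\sigma,\sigma'}_{\boldsymbol r,\boldsymbol r'}=\overline{t^{\sigma',\sigma}_{\boldsymbol r',\boldsymbol r}}$ and real $\mu_{\boldsymbol r,\sigma},U_{\boldsymbol r}$; $c,c^\dagger$ are spin-1/2 fermion operators with canonical anticommutation relations, $\hat n_{\boldsymbol r,\sigma}=c^\dagger_{\boldsymbol r,\sigma}c_{\boldsymbol r,\sigma}$; $q_{\boldsymbol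 r}\in\mathbb{C}$. The vacuum $\ket\Omega$ is the state annihilated by all $c_{\boldsymbol r,\sigma}$. *)

theory Defs
  imports Complex_Main "HOL-Library.FuncSet" "HOL-Library.Function_Algebras"
begin

text \<open>A state is a coefficient
function on the occupation-number basis: basis vectors are indexed by the set of
occupied modes.  Sites form a finite linearly ordered type; a graph vertex set
V is a subset of it.\<close>

datatype spin = Up | Dn

type_synonym 'a state = "('a \<times> spin) set \<Rightarrow> complex"
type_synonym 'a op = "'a state \<Rightarrow> 'a state"

definition mode_less :: "('a::linorder \<times> spin) \<Rightarrow> ('a \<times> spin) \<Rightarrow> bool" where
  "mode_less m m' \<longleftrightarrow> fst m < fst m' \<or> (fst m = fst m' \<and> snd m = Up \<and> snd m' = Dn)"

definition jw_sign :: "('a::linorder \<times> spin) \<Rightarrow> ('a \<times> spin) set \<Rightarrow> complex" where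
  "jw_sign m T = (-1) ^ card {x \<in> T. mode_less x m}"

text \<open>Creation: c_dag m |T> = sign |T + m> if m not in T, else 0.\<close>
definition cdag :: "('a::{linorder,finite} \<times> spin) \<Rightarrow> 'a op" where
  "cdag m \<psi> = (\<lambda>S. if m \<in> S then jw_sign m (S - {m}) * \<psi> (S - {m}) else 0)"

definition cann :: "('a::{linorder,finite} \<times> spin) \<Rightarrow> 'a op" where
  "cann m \<psi> = (\<lambda>S. if m \<notin> S then jw_sign m S * \<psi> (insert m S) else 0)"

definition num :: "'a::{linorder,finite} \<Rightarrow> spin \<Rightarrow> 'a op" where
  "num r s = cdag (r, s) \<circ> cann (r, s)"

definition scale :: "complex \<Rightarrow> 'a state \<Rightarrow> 'a state" where
  "scale a \<psi> = (\<lambda>S. a * \<psi> S)"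

definition comm :: "'a op \<Rightarrow> 'a op \<Rightarrow> 'a op" where
  "comm A B = (\<lambda>\<psi>. A (B \<psi>) - B (A \<psi>))"

definition vacuum :: "'a::{linorder,finite} state" where
  "vacuum = (\<lambda>S. if S = {} then 1 else 0)"

text \<open>Generalized Hubbard Hamiltonian. E is the set of oriented edges.\<close>
definition H_gen :: "'a::{linorder,finite} set \<Rightarrow> ('a \<times> 'a) set
   \<Rightarrow> ('a \<Rightarrow> spin \<Rightarrow> 'a \<Rightarrow> spin \<Rightarrow> complex) \<Rightarrow> ('a \<Rightarrow> spin \<Rightarrow> real) \<Rightarrow> ('a \<Rightarrow> real) \<Rightarrow> 'a op" where
  "H_gen V E t \<mu> U \<psi> =
     - (\<Sum>\<sigma>\<in>UNIV. \<Sum>\<sigma>'\<in>UNIV. \<Sum>(r, r')\<in>E.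
          scale (t r \<sigma> r' \<sigma>') (cdag (r, \<sigma>) (cann (r', \<sigma>') \<psi>))
        + scale (t r' \<sigma>' r \<sigma>) (cdag (r', \<sigma>') (cann (r, \<sigma>) \<psi>)))
     - (\<Sum>r\<in>V. \<Sum>\<sigma>\<in>UNIV. scale (complex_of_real (\<mu> r \<sigma>)) (num r \<sigma> \<psi>))
     + (\<Sum>r\<in>V. scale (complex_of_real (U r)) (num r Up (num r Dn \<psi>)))"

definition eta_dag :: "'a::{linorder,finite} set \<Rightarrow> ('a \<Rightarrow> complex) \<Rightarrow> 'a op" where
  "eta_dag V q \<psi> = (\<Sum>r\<in>V. scale (q r) (cdag (r, Up) (cdag (r, Dn) \<psi>)))"

text \<open>Product of number operators over a finite set S of sites (they commute;
we compose them in increasing site order).\<close>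
definition num_prod :: "'a::{linorder,finite} set \<Rightarrow> ('a \<Rightarrow> spin) \<Rightarrow> 'a op" where
  "num_prod S \<sigma> = foldr (\<circ>) (map (\<lambda>r. num r (\<sigma> r)) (sorted_list_of_set S)) id"

definition I_int :: "'a::{linorder,finite} set set \<Rightarrow> ('a set \<Rightarrow> ('a \<Rightarrow> spin) \<Rightarrow> real) \<Rightarrow> 'a op" where
  "I_int \<S> Vs \<psi> = (\<Sum>S\<in>\<S>. \<Sum>\<sigma>\<in>(S \<rightarrow>\<^sub>E (UNIV::spin set)).
      scale (complex_of_real (Vs S \<sigma>)) (num_prod S \<sigma> \<psi>))"

primrec Hseq :: "'a op \<Rightarrow> 'a op \<Rightarrow> nat \<Rightarrow> 'a op" where
  "Hseq H eta 0 = H"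
| "Hseq H eta (Suc n) = comm (Hseq H eta n) eta"

end

theory Submission
  imports Defs
begin

text \<open>The pair operator \<open>\<eta>\<^sup>\<dagger>\<close> only ever fills sites with doublons, so \<open>(\<eta>\<^sup>\<dagger>)\<^sup>n\<Omega>\<close> is supported on
doublon configurations. The interaction is diagonal, and its \<open>k\<close>-fold commutator with \<open>\<eta>\<^sup>\<dagger>\<close> creates
doublons on \<open>k\<close>-element sets \<open>W\<close>, weighted by a finite difference of its diagonal coefficient in
the directions \<open>W\<close>. Since emptying a doubly occupied site kills every density factor there, this
difference only survives on interaction sets \<open>S \<supseteq> W\<close>, where it is the density product over
\<open>S - W\<close>. On the vacuum these factors vanish as long as \<open>|W| \<le> M < |S|\<close>; for \<open>|W| = M + 1\<close> we
get \<open>W = S\<close> and the weight \<open>\<Sigma>\<^sub>\<sigma> V\<^sub>S\<^sup>\<sigma> = 0\<close>. On a doublon configuration all the products over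
\<open>S\<close> agree, so the interaction vanishes there by the same sum rule. The \<open>H\<^sub>g\<^sub>e\<^sub>n\<close> part only uses
the ladder relation \<open>[H\<^sub>g\<^sub>e\<^sub>n, \<eta>\<^sup>\<dagger>] = \<E>\<eta>\<^sup>\<dagger>\<close>.\<close>

section \<open>Nested commutators with a ladder operator\<close>

lemma comm_add:
  assumes "\<And>x y. e (x + y) = e x + e y"
  shows "comm (\<lambda>\<psi>. A \<psi> + B \<psi>) e = (\<lambda>\<psi>. comm A e \<psi> + comm B e \<psi>)"
  unfolding comm_def assms by (simp only: add_diff_add)

lemma Hseq_add:
  assumes "\<And>x y. e (x + y) = e x + e y"
  shows "Hseq (\<lambda>\<psi>. A \<psi> + B \<psi>) e n = (\<lambda>\<psi>. Hseq A e n \<psi> + Hseq B e n \<psi>)"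
  by (induction n) (simp_all only: Hseq.simps comm_add[OF assms])

lemma Hseq_add_index: "Hseq A e (m + n) = Hseq (Hseq A e m) e n"
  by (induction n) simp_all

lemma Hseq_zero:
  assumes "e 0 = 0"
  shows "Hseq (\<lambda>_. 0) e n = (\<lambda>_. 0)"
proof (induction n)
  case (Suc n)
  then show ?case
    using assms by (simp add: comm_def zero_fun_def)
qed simp

lemma scale_add: "scale a \<psi> + scale b \<psi> = scale (a + b) \<psi>"
  by (simp add: scale_def fun_eq_iff algebra_simps)

lemma Hseq_eq_0_if_comm_eq_scale:
  assumes comm_eq: "comm A e = (\<lambda>\<psi>. scale c (e \<psi>))"
    and e_scale: "\<And>a \<psi>. e (scale a \<psi>) = scale a (e \<psi>)"
    and "2 \<le> n"
  shows "Hseq A e n = (\<lambda>_. 0)"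
proof -
  have "e 0 = 0"
    using e_scale[of 0 0] by (simp add: scale_def zero_fun_def)
  moreover have "Hseq A e 2 = (\<lambda>_. 0)"
    using comm_eq by (simp add: numeral_2_eq_2 comm_def e_scale)
  moreover obtain m where "n = 2 + m"
    using \<open>2 \<le> n\<close> le_Suc_ex by blast
  ultimately show ?thesis
    by (metis Hseq_add_index Hseq_zero)
qed

lemma ladder_power_eigen:
  assumes comm_eq: "comm A e = (\<lambda>\<psi>. scale c (e \<psi>))"
    and e_scale: "\<And>a \<psi>. e (scale a \<psi>) = scale a (e \<psi>)"
    and "A v = 0"
  shows "A ((e ^^ n) v) = scale (of_nat n * c) ((e ^^ n) v)"
proof (induction n)
  case 0
  then show ?case
    using \<open>A v = 0\<close> by (simp add: scale_def fun_eq_iff)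
next
  case (Suc n)
  let ?x = "(e ^^ n) v"
  have "A (e ?x) = scale c (e ?x) + e (A ?x)"
    using fun_cong[OF comm_eq, of ?x] by (simp add: comm_def algebra_simps)
  also have "\<dots> = scale (of_nat (Suc n) * c) (e ?x)"
    by (simp add: Suc.IH e_scale scale_add algebra_simps)
  finally show ?case
    by simp
qed

section \<open>Doublon creation on the Fock space\<close>

lemma sum_apply: "(\<Sum>x\<in>A. f x) T = (\<Sum>x\<in>A. f x T)"
  by (induction A rule: infinite_finite_induct) auto

lemma jw_sign_square: "jw_sign m T * jw_sign m T = 1"
  unfolding jw_sign_def by (simp flip: power_mult_distrib)

lemma num_apply: "num r s \<psi> T = (if (r, s) \<in> T then \<psi> T else 0)"
  by (auto simp: num_def cdag_def cann_def insert_absorb jw_sign_square)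

lemma num_prod_apply: "num_prod S \<sigma> \<psi> T = (if \<forall>s\<in>S. (s, \<sigma> s) \<in> T then \<psi> T else 0)"
proof -
  have "foldr (\<circ>) (map (\<lambda>r. num r (\<sigma> r)) xs) id \<psi> T = (if \<forall>s\<in>set xs. (s, \<sigma> s) \<in> T then \<psi> T else 0)"
    for xs by (induction xs arbitrary: \<psi>) (auto simp: num_apply)
  then show ?thesis
    by (simp add: num_prod_def)
qed

abbreviation doublons :: "'a set \<Rightarrow> ('a \<times> spin) set" where
  "doublons W \<equiv> W \<times> UNIV"

definition pair_create :: "'a set \<Rightarrow> 'a state \<Rightarrow> 'a state" where
  "pair_create W \<psi> = (\<lambda>T. if doublons W \<subseteq> T then \<psi> (T - doublons W) else 0)"

lemma cdag_cdag_same_site: "cdag (r, Up) (cdag (r, Dn) \<psi>) = pair_create {r} \<psi>"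
proof
  fix T :: "('a \<times> spin) set"
  \<comment> \<open>both Jordan-Wigner signs count the occupied modes on sites below \<open>r\<close>\<close>
  have "{x \<in> T - {(r, Up)}. mode_less x (r, Up)} = {x \<in> T - {(r, Up)} - {(r, Dn)}. mode_less x (r, Dn)}"
    by (auto simp: mode_less_def)
  then have sign: "jw_sign (r, Up) (T - {(r, Up)}) * jw_sign (r, Dn) (T - {(r, Up)} - {(r, Dn)}) = 1"
    unfolding jw_sign_def by (simp flip: power_mult_distrib)
  have pair: "doublons {r} = {(r, Up), (r, Dn)}"
    using spin.exhaust by auto
  have "doublons {r} \<subseteq> T \<longleftrightarrow> (r, Up) \<in> T \<and> (r, Dn) \<in> T - {(r, Up)}"
    unfolding pair by auto
  moreover have "T - {(r, Up)} - {(r, Dn)} = T - doublons {r}"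
    unfolding pair by auto
  ultimately show "cdag (r, Up) (cdag (r, Dn) \<psi>) T = pair_create {r} \<psi> T"
    using sign unfolding cdag_def pair_create_def by (simp add: mult.assoc[symmetric])
qed

lemma pair_create_pair_create:
  "pair_create A (pair_create B \<psi>) = (if A \<inter> B = {} then pair_create (A \<union> B) \<psi> else (\<lambda>_. 0))"
proof (cases "A \<inter> B = {}")
  case True
  then have "doublons B \<subseteq> T - doublons A \<longleftrightarrow> doublons B \<subseteq> T" for T :: "('a \<times> spin) set"
    by auto
  moreover have "T - doublons A - doublons B = T - doublons (A \<union> B)" for T :: "('a \<times> spin) set"
    by auto
  moreover have "doublons (A \<union> B) \<subseteq> T \<longleftrightarrow> doublons A \<subseteq> T \<and> doublons B \<subseteq> T" for T :: "('a \<times> spin) set"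
    by auto
  ultimately show ?thesis
    using True by (simp add: pair_create_def fun_eq_iff del: Sigma_Un_distrib1)
next
  case False
  then obtain x where "x \<in> A" "x \<in> B" by auto
  then have "\<not> (doublons A \<subseteq> T \<and> doublons B \<subseteq> T - doublons A)" for T :: "('a \<times> spin) set"
    by blast
  then show ?thesis
    using False by (auto simp: pair_create_def fun_eq_iff)
qed

lemma pair_create_add_site:
  "pair_create W (pair_create {r} \<psi>) T = (if r \<in> W then 0 else pair_create (insert r W) \<psi> T)"
  "pair_create {r} (pair_create W \<psi>) T = (if r \<in> W then 0 else pair_create (insert r W) \<psi> T)"
  by (simp_all add: pair_create_pair_create)

lemma pair_create_mult:
  "pair_create W (\<lambda>T. f T * \<psi> T) = (\<lambda>T. f (T - doublons W) * pair_create W \<psi> T)"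
  by (simp add: pair_create_def fun_eq_iff)

lemma pair_create_sum:
  "pair_create W (\<lambda>T. \<Sum>x\<in>A. f x T) = (\<lambda>T. \<Sum>x\<in>A. pair_create W (f x) T)"
  by (simp add: pair_create_def fun_eq_iff)

lemma eta_dag_apply: "eta_dag V q \<psi> T = (\<Sum>r\<in>V. q r * pair_create {r} \<psi> T)"
  by (simp add: eta_dag_def sum_apply scale_def cdag_cdag_same_site)

lemma eta_dag_add: "eta_dag V q (\<phi> + \<psi>) = eta_dag V q \<phi> + eta_dag V q \<psi>"
  by (auto simp: fun_eq_iff eta_dag_apply pair_create_def plus_fun_def sum.distrib[symmetric] distrib_left
      intro!: sum.cong)

lemma eta_dag_scale: "eta_dag V q (scale a \<psi>) = scale a (eta_dag V q \<psi>)"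
  by (auto simp: fun_eq_iff eta_dag_apply pair_create_def scale_def sum_distrib_left intro!: sum.cong)

lemma eta_dag_power_vacuum_doublons:
  "(eta_dag V q ^^ n) vacuum T \<noteq> 0 \<Longrightarrow> \<exists>W. T = doublons W"
proof (induction n arbitrary: T)
  case 0
  then show ?case
    by (auto simp: vacuum_def split: if_splits)
next
  case (Suc n)
  have "(\<Sum>r\<in>V. q r * pair_create {r} ((eta_dag V q ^^ n) vacuum) T) \<noteq> 0"
    using Suc.prems unfolding funpow.simps(2) o_apply eta_dag_apply[of V q "(eta_dag V q ^^ n) vacuum"] .
  then obtain r where "q r * pair_create {r} ((eta_dag V q ^^ n) vacuum) T \<noteq> 0"
    by (rule sum.not_neutral_contains_not_neutral)
  then have r: "doublons {r} \<subseteq> T" "(eta_dag V q ^^ n) vacuum (T - doublons {r}) \<noteq> 0"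
    by (auto simp: pair_create_def split: if_splits)
  obtain W where "T - doublons {r} = doublons W"
    using Suc.IH[OF r(2)] ..
  moreover have "T = doublons {r} \<union> (T - doublons {r})"
    using r(1) by (simp add: Un_absorb1)
  ultimately have "T = doublons (insert r W)"
    by (metis Sigma_Un_distrib1 insert_is_Un)
  then show ?case ..
qed

lemma H_gen_vacuum: "H_gen V E t \<mu> U vacuum = 0"
proof -
  have "cann m vacuum = 0" "cdag m 0 = 0" "cann m 0 = 0" "scale a (0 :: 'a state) = 0"
    for m :: "'a \<times> spin" and a
    by (simp_all add: cann_def cdag_def scale_def vacuum_def fun_eq_iff)
  then show ?thesis
    by (simp add: H_gen_def num_def)
qed

section \<open>Operators that create doublons\<close>

text \<open>Every nested commutator of a diagonal operator with \<open>\<eta>\<^sup>\<dagger>\<close> has this form: it fills the sites of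
some \<open>W \<subseteq> V\<close> with doublons, weighted by a coefficient depending on the resulting configuration.\<close>

definition pair_op :: "'a set \<Rightarrow> ('a set \<Rightarrow> ('a \<times> spin) set \<Rightarrow> complex) \<Rightarrow> 'a op" where
  "pair_op V c \<psi> = (\<lambda>T. \<Sum>W\<in>Pow V. c W T * pair_create W \<psi> T)"

lemma pair_op_cong:
  assumes "\<And>W T. W \<subseteq> V \<Longrightarrow> doublons W \<subseteq> T \<Longrightarrow> c W T = d W T"
  shows "pair_op V c = pair_op V d"
  using assms by (auto simp: pair_op_def pair_create_def fun_eq_iff intro!: sum.cong)

lemma pair_op_vacuum:
  assumes "\<And>W. W \<subseteq> V \<Longrightarrow> c W (doublons W) = 0"
  shows "pair_op V c vacuum = 0"
proof
  fix T
  have "c W T * pair_create W vacuum T = 0" if "W \<subseteq> V" for W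
    using assms[OF that] by (auto simp: pair_create_def vacuum_def)
  then show "pair_op V c vacuum T = 0 T"
    unfolding pair_op_def by (simp add: sum.neutral)
qed

lemma sum_Pow_not_member:
  "finite V \<Longrightarrow> (\<Sum>W\<in>{W \<in> Pow V. r \<notin> W}. f W) = (\<Sum>W\<in>Pow V. if r \<in> W then 0 else f W)"
  by (subst sum.inter_filter) (auto intro!: sum.cong)

lemma sum_Pow_sum_member:
  assumes "finite V"
  shows "(\<Sum>W\<in>Pow V. \<Sum>r\<in>W. f r W) = (\<Sum>r\<in>V. \<Sum>W\<in>{W \<in> Pow V. r \<notin> W}. f r (insert r W))"
proof -
  have "(\<Sum>W\<in>Pow V. \<Sum>r\<in>W. f r W) = (\<Sum>W\<in>Pow V. \<Sum>r\<in>{r \<in> V. r \<in> W}. f r W)"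
    by (rule sum.cong) (auto intro: arg_cong[where f = "\<lambda>A. sum _ A"])
  also have "\<dots> = (\<Sum>r\<in>V. \<Sum>W\<in>{W \<in> Pow V. r \<in> W}. f r W)"
    using assms by (intro sum.swap_restrict) auto
  also have "\<dots> = (\<Sum>r\<in>V. \<Sum>W\<in>{W \<in> Pow V. r \<notin> W}. f r (insert r W))"
  proof (rule sum.cong[OF refl])
    fix r assume "r \<in> V"
    then show "(\<Sum>W\<in>{W \<in> Pow V. r \<in> W}. f r W) = (\<Sum>W\<in>{W \<in> Pow V. r \<notin> W}. f r (insert r W))"
      by (intro sum.reindex_bij_witness[where i = "insert r" and j = "\<lambda>W. W - {r}"])
        (auto simp: insert_absorb)
  qed
  finally show ?thesis .
qed

lemma pair_op_eta_dag:
  "pair_op V c (eta_dag V q \<psi>) T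
     = (\<Sum>r\<in>V. \<Sum>W\<in>{W \<in> Pow V. r \<notin> W}. q r * c W T * pair_create (insert r W) \<psi> T)"
proof -
  have "pair_op V c (eta_dag V q \<psi>) T
      = (\<Sum>W\<in>Pow V. \<Sum>r\<in>V. if r \<in> W then 0 else q r * c W T * pair_create (insert r W) \<psi> T)"
    unfolding pair_op_def eta_dag_apply[abs_def] pair_create_sum pair_create_mult[of _ "\<lambda>_. q _"]
    by (auto simp: pair_create_add_site sum_distrib_left intro!: sum.cong)
  then show ?thesis
    unfolding sum_Pow_not_member[OF finite] by (simp add: sum.swap[of _ "Pow V"])
qed

lemma eta_dag_pair_op:
  "eta_dag V q (pair_op V c \<psi>) T
     = (\<Sum>r\<in>V. \<Sum>W\<in>{W \<in> Pow V. r \<notin> W}. q r * c W (T - doublons {r}) * pair_create (insert r W) \<psi> T)"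
  unfolding eta_dag_apply pair_op_def pair_create_sum pair_create_mult sum_Pow_not_member[OF finite]
  by (auto simp: pair_create_add_site sum_distrib_left mult_ac intro!: sum.cong)

lemma comm_pair_op_eta_dag:
  "comm (pair_op V c) (eta_dag V q)
     = pair_op V (\<lambda>W T. \<Sum>r\<in>W. q r * (c (W - {r}) T - c (W - {r}) (T - doublons {r})))"
proof (intro ext)
  fix \<psi> T
  let ?c' = "\<lambda>W T. \<Sum>r\<in>W. q r * (c (W - {r}) T - c (W - {r}) (T - doublons {r}))"
  let ?\<Delta> = "\<lambda>r W. q r * (c W T - c W (T - doublons {r})) * pair_create (insert r W) \<psi> T"
  have "pair_op V ?c' \<psi> T
      = (\<Sum>r\<in>V. \<Sum>W\<in>{W \<in> Pow V. r \<notin> W}. ?\<Delta> r W)"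
    unfolding pair_op_def sum_distrib_right sum_Pow_sum_member[OF finite]
    by (intro sum.cong refl) auto
  also have "\<dots> = comm (pair_op V c) (eta_dag V q) \<psi> T"
    unfolding comm_def fun_diff_def pair_op_eta_dag eta_dag_pair_op
    by (simp add: sum_subtractf[symmetric] algebra_simps)
  finally show "comm (pair_op V c) (eta_dag V q) \<psi> T = pair_op V ?c' \<psi> T" ..
qed

section \<open>Nested commutators of the density interaction\<close>

text \<open>The diagonal coefficient of \<open>\<Sum>\<sigma>. v \<sigma> * (\<Prod>s\<in>S. num s (\<sigma> s))\<close> with the factors on \<open>W\<close> dropped,
which is its finite difference in the directions \<open>W\<close>.\<close>

definition reduced_density :: "'a set \<Rightarrow> (('a \<Rightarrow> spin) \<Rightarrow> real) \<Rightarrow> 'a set \<Rightarrow> ('a \<times> spin) set \<Rightarrow> real" where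
  "reduced_density S v W T = (if W \<subseteq> S
      then \<Sum>\<sigma>\<in>S \<rightarrow>\<^sub>E UNIV. if \<forall>s\<in>S - W. (s, \<sigma> s) \<in> T then v \<sigma> else 0 else 0)"

definition reduced_interaction ::
    "'a set set \<Rightarrow> ('a set \<Rightarrow> ('a \<Rightarrow> spin) \<Rightarrow> real) \<Rightarrow> 'a set \<Rightarrow> ('a \<times> spin) set \<Rightarrow> real" where
  "reduced_interaction \<S> Vs W T = (\<Sum>S\<in>\<S>. reduced_density S (Vs S) W T)"

lemma I_int_apply: "I_int \<S> Vs \<psi> T = complex_of_real (reduced_interaction \<S> Vs {} T) * \<psi> T"
  by (simp add: I_int_def reduced_interaction_def reduced_density_def sum_apply scale_def num_prod_apply
      sum_distrib_right if_distrib[of complex_of_real] cong: if_cong)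
    (auto intro!: sum.cong)

lemma reduced_density_remove_site:
  assumes "r \<in> W" "doublons W \<subseteq> T"
  shows "reduced_density S v (W - {r}) T - reduced_density S v (W - {r}) (T - doublons {r})
       = reduced_density S v W T"
proof -
  have unshifted: "(\<forall>s\<in>S - (W - {r}). (s, \<sigma> s) \<in> T) \<longleftrightarrow> (\<forall>s\<in>S - W. (s, \<sigma> s) \<in> T)" for \<sigma>
    using assms by auto
  have shifted: "(\<forall>s\<in>S - (W - {r}). (s, \<sigma> s) \<in> T - doublons {r})
      \<longleftrightarrow> r \<notin> S \<and> (\<forall>s\<in>S - (W - {r}). (s, \<sigma> s) \<in> T)" for \<sigma>
    by auto
  show ?thesis
    unfolding reduced_density_def unshifted shifted using assms(1) by (cases "r \<in> S") auto
qed

lemma reduced_interaction_remove_site: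
  assumes "r \<in> W" "doublons W \<subseteq> T"
  shows "reduced_interaction \<S> Vs (W - {r}) T - reduced_interaction \<S> Vs (W - {r}) (T - doublons {r})
       = reduced_interaction \<S> Vs W T"
  unfolding reduced_interaction_def sum_subtractf[symmetric] reduced_density_remove_site[OF assms] ..

lemma reduced_density_doublons:
  assumes "W \<noteq> S"
  shows "reduced_density S v W (doublons W) = 0"
proof -
  have "W \<subseteq> S \<Longrightarrow> \<exists>s\<in>S - W. (s, \<sigma> s) \<notin> doublons W" for \<sigma> :: "'a \<Rightarrow> spin"
    using assms psubset_imp_ex_mem[of W S] by auto
  then show ?thesis
    by (auto simp: reduced_density_def)
qed

lemma reduced_density_self: "reduced_density S v S T = (\<Sum>\<sigma>\<in>S \<rightarrow>\<^sub>E UNIV. v \<sigma>)"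
  by (simp add: reduced_density_def)

lemma reduced_density_not_subset: "\<not> W \<subseteq> S \<Longrightarrow> reduced_density S v W T = 0"
  by (simp add: reduced_density_def)

text \<open>The factor \<open>k!\<close> counts the orders in which \<open>k\<close> commutators can create the doublons of \<open>W\<close>.\<close>

definition nested_comm_coeff :: "('a \<Rightarrow> complex) \<Rightarrow> 'a set set \<Rightarrow> ('a set \<Rightarrow> ('a \<Rightarrow> spin) \<Rightarrow> real)
    \<Rightarrow> nat \<Rightarrow> 'a set \<Rightarrow> ('a \<times> spin) set \<Rightarrow> complex" where
  "nested_comm_coeff q \<S> Vs k W T = (if card W = k
      then fact k * (\<Prod>r\<in>W. q r) * complex_of_real (reduced_interaction \<S> Vs W T) else 0)"

lemma I_int_eq_pair_op: "I_int \<S> Vs = pair_op V (nested_comm_coeff q \<S> Vs 0)"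
proof (intro ext)
  fix \<psi> T
  have "pair_op V (nested_comm_coeff q \<S> Vs 0) \<psi> T
      = (\<Sum>W\<in>Pow V. if W = {} then complex_of_real (reduced_interaction \<S> Vs {} T) * \<psi> T else 0)"
    unfolding pair_op_def nested_comm_coeff_def
    by (intro sum.cong refl) (auto simp: pair_create_def card_eq_0_iff)
  then show "I_int \<S> Vs \<psi> T = pair_op V (nested_comm_coeff q \<S> Vs 0) \<psi> T"
    by (simp add: I_int_apply)
qed

lemma comm_pair_op_nested_comm_coeff:
  "comm (pair_op V (nested_comm_coeff q \<S> Vs k)) (eta_dag V q)
     = pair_op V (nested_comm_coeff q \<S> Vs (Suc k))"
  unfolding comm_pair_op_eta_dag
proof (rule pair_op_cong)
  fix W :: "'a set" and T :: "('a \<times> spin) set"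
  assume "doublons W \<subseteq> T"
  let ?c = "nested_comm_coeff q \<S> Vs k"
  show "(\<Sum>r\<in>W. q r * (?c (W - {r}) T - ?c (W - {r}) (T - doublons {r})))
      = nested_comm_coeff q \<S> Vs (Suc k) W T"
  proof (cases "card W = Suc k")
    case True
    have "q r * (?c (W - {r}) T - ?c (W - {r}) (T - doublons {r}))
        = fact k * (\<Prod>r\<in>W. q r) * complex_of_real (reduced_interaction \<S> Vs W T)" if "r \<in> W" for r
      using that True reduced_interaction_remove_site[OF that \<open>doublons W \<subseteq> T\<close>, of \<S> Vs]
      by (simp add: nested_comm_coeff_def prod.remove[of W r] flip: right_diff_distrib of_real_diff)
    then show ?thesis
      using True by (simp add: nested_comm_coeff_def)
  next
    case False
    then have "card (W - {r}) \<noteq> k" if "r \<in> W" for r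
      using that by (simp add: card_Diff_singleton) (metis card_0_eq finite empty_iff Suc_pred neq0_conv)
    then show ?thesis
      using False by (simp add: nested_comm_coeff_def)
  qed
qed

lemma Hseq_I_int: "Hseq (I_int \<S> Vs) (eta_dag V q) k = pair_op V (nested_comm_coeff q \<S> Vs k)"
  by (induction k) (simp_all add: I_int_eq_pair_op comm_pair_op_nested_comm_coeff)

lemma Hseq_I_int_vacuum:
  assumes "\<And>S. S \<in> \<S> \<Longrightarrow> k < card S"
  shows "Hseq (I_int \<S> Vs) (eta_dag V q) k vacuum = 0"
  unfolding Hseq_I_int
proof (rule pair_op_vacuum)
  fix W :: "'a set"
  have "card W = k \<Longrightarrow> S \<in> \<S> \<Longrightarrow> W \<noteq> S" for S
    using assms[of S] by auto
  then show "nested_comm_coeff q \<S> Vs k W (doublons W) = 0"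
    by (auto simp: nested_comm_coeff_def reduced_interaction_def reduced_density_doublons intro!: sum.neutral)
qed

lemma Hseq_I_int_eq_0:
  assumes "\<And>S. S \<in> \<S> \<Longrightarrow> card S \<le> k \<and> (\<Sum>\<sigma>\<in>S \<rightarrow>\<^sub>E UNIV. Vs S \<sigma>) = 0"
  shows "Hseq (I_int \<S> Vs) (eta_dag V q) k = (\<lambda>\<psi>. 0)"
proof -
  have "reduced_density S (Vs S) W T = 0" if "card W = k" "S \<in> \<S>" for W T S
  proof (cases "W \<subseteq> S")
    case True
    then have "S = W"
      using card_seteq[of S W] assms[OF \<open>S \<in> \<S>\<close>] \<open>card W = k\<close> by auto
    then show ?thesis
      using assms[OF \<open>S \<in> \<S>\<close>] by (simp add: reduced_density_self)
  qed (simp add: reduced_density_not_subset)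
  then have "pair_op V (nested_comm_coeff q \<S> Vs k) = pair_op V (\<lambda>_ _. 0)"
    by (intro pair_op_cong) (simp add: nested_comm_coeff_def reduced_interaction_def)
  then show ?thesis
    by (simp add: Hseq_I_int pair_op_def fun_eq_iff)
qed

lemma I_int_doublon_state:
  assumes "\<And>S. S \<in> \<S> \<Longrightarrow> (\<Sum>\<sigma>\<in>S \<rightarrow>\<^sub>E UNIV. Vs S \<sigma>) = 0"
    and "\<And>T. \<psi> T \<noteq> 0 \<Longrightarrow> \<exists>W. T = doublons W"
  shows "I_int \<S> Vs \<psi> = 0"
proof
  fix T
  show "I_int \<S> Vs \<psi> T = 0 T"
  proof (cases "\<psi> T = 0")
    case False
    then obtain W where T: "T = doublons W"
      using assms(2) by blast
    have "reduced_density S (Vs S) {} T = 0" if "S \<in> \<S>" for S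
    proof -
      have occupied: "(\<forall>s\<in>S - {}. (s, \<sigma> s) \<in> T) \<longleftrightarrow> S \<subseteq> W" for \<sigma> :: "'a \<Rightarrow> spin"
        unfolding T by auto
      show ?thesis
        unfolding reduced_density_def occupied using assms(1)[OF that] by (cases "S \<subseteq> W") simp_all
    qed
    then show ?thesis
      by (simp add: I_int_apply reduced_interaction_def)
  qed (simp add: I_int_apply)
qed

theorem mainTheorem6:
  fixes V :: "'a::{linorder,finite} set"
    and E :: "('a \<times> 'a) set"
    and t :: "'a \<Rightarrow> spin \<Rightarrow> 'a \<Rightarrow> spin \<Rightarrow> complex"
    and \<mu> :: "'a \<Rightarrow> spin \<Rightarrow> real"
    and U :: "'a \<Rightarrow> real"
    and q :: "'a \<Rightarrow> complex"
    and \<E> :: real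
    and M :: nat
    and \<S> :: "'a set set"
    and Vs :: "'a set \<Rightarrow> ('a \<Rightarrow> spin) \<Rightarrow> real"
  assumes E_sub: "E \<subseteq> V \<times> V"
    and E_irrefl: "\<And>r r'. (r, r') \<in> E \<Longrightarrow> r \<noteq> r'"
    and E_orient: "\<And>r r'. (r, r') \<in> E \<Longrightarrow> (r', r) \<notin> E"
    and t_herm: "\<And>r \<sigma> r' \<sigma>'. t r \<sigma> r' \<sigma>' = cnj (t r' \<sigma>' r \<sigma>)"
    and eig: "comm (H_gen V E t \<mu> U) (eta_dag V q) = (\<lambda>\<psi>. scale (complex_of_real \<E>) (eta_dag V q \<psi>))"
    and M_ge: "M \<ge> 1"
    and S_sub: "\<And>S. S \<in> \<S> \<Longrightarrow> S \<subseteq> V \<and> card S = M + 1"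
    and V_sum: "\<And>S. S \<in> \<S> \<Longrightarrow> (\<Sum>\<sigma>\<in>(S \<rightarrow>\<^sub>E (UNIV::spin set)). Vs S \<sigma>) = 0"
  defines "H \<equiv> (\<lambda>\<psi>. H_gen V E t \<mu> U \<psi> + I_int \<S> Vs \<psi>)"
  shows "H vacuum = 0
    \<and> Hseq H (eta_dag V q) 1 vacuum = scale (complex_of_real \<E>) (eta_dag V q vacuum)
    \<and> (\<forall>n. 2 \<le> n \<and> n \<le> M \<longrightarrow> Hseq H (eta_dag V q) n vacuum = 0)
    \<and> Hseq H (eta_dag V q) (M + 1) = (\<lambda>\<psi>. 0)
    \<and> (\<forall>n::nat. H ((eta_dag V q ^^ n) vacuum)
                 = scale (of_nat n * complex_of_real \<E>) ((eta_dag V q ^^ n) vacuum))"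
proof -
  let ?\<eta> = "eta_dag V q"
  have Hseq_H: "Hseq H ?\<eta> n = (\<lambda>\<psi>. Hseq (H_gen V E t \<mu> U) ?\<eta> n \<psi> + Hseq (I_int \<S> Vs) ?\<eta> n \<psi>)" for n
    unfolding H_def by (rule Hseq_add[OF eta_dag_add])
  have gen_vanish: "Hseq (H_gen V E t \<mu> U) ?\<eta> n = (\<lambda>_. 0)" if "2 \<le> n" for n
    using eig eta_dag_scale that by (rule Hseq_eq_0_if_comm_eq_scale)
  have int_vacuum: "Hseq (I_int \<S> Vs) ?\<eta> n vacuum = 0" if "n \<le> M" for n
    using S_sub that by (intro Hseq_I_int_vacuum) fastforce
  have int_top: "Hseq (I_int \<S> Vs) ?\<eta> (M + 1) = (\<lambda>_. 0)"
    using S_sub V_sum by (intro Hseq_I_int_eq_0) auto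
  have "H vacuum = 0"
    using int_vacuum[of 0] by (simp add: H_def H_gen_vacuum)
  moreover have "Hseq H ?\<eta> 1 vacuum = scale (complex_of_real \<E>) (?\<eta> vacuum)"
    using int_vacuum[of 1] M_ge eig by (simp only: Hseq_H) simp
  moreover have "Hseq H ?\<eta> n vacuum = 0" if "2 \<le> n" "n \<le> M" for n
    using gen_vanish int_vacuum that by (simp add: Hseq_H)
  moreover have "Hseq H ?\<eta> (M + 1) = (\<lambda>_. 0)"
    using gen_vanish[of "M + 1"] int_top M_ge by (simp only: Hseq_H) simp
  moreover have "H ((?\<eta> ^^ n) vacuum) = scale (of_nat n * complex_of_real \<E>) ((?\<eta> ^^ n) vacuum)" for n
    using ladder_power_eigen[OF eig eta_dag_scale H_gen_vacuum]
      I_int_doublon_state[OF V_sum eta_dag_power_vacuum_doublons]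
    by (simp add: H_def)
  ultimately show ?thesis
    by blast
qed

end
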